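(* Let $\mathcal{H}$ be a directed hypergraph on $\{1,2,3\}$ all of whose hyperedges $e$ have order $3$ and satisfy $T(e)\cap H(e)=\emptyset$ (so $\mathcal{E}\subseteq\{(\{2,3\},\{1\}),(\{1,3\},\{2\}),(\{1,2\},\{3\})\}$), and consider a network dynamical system on $\mathcal{H}$ with smooth $F$ and coupling homogeneous in each order. Then its vector field is not equal to the Guckenheimer--Holmes vector field $$\dot x_1 = x_1 + a x_1^3 + b x_1x_2^2 + c x_1x_3^2,\quad \dot x_2 = x_2 + a x_2^3 + b x_2x_3^2 + c x_1^2x_2,\quad \dot x_3 = x_3 + a x_3^3 + b x_1^2x_3 + c x_2^2x_3$$ for any real $a,b,c$ with $b\ne c$; in particular the Guckenheimer--Holmes system with $a+b+c=-1$, $-\tfrac13<a<0$, $c<a<b<0$ cannot be realized.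
   Context: A directed hypergraph on $\mathcal{V}=\{1,\dots,N\}$ is a set $\mathcal{E}$ of hyperedges $e=(T(e),H(e))$ with nonempty tail and head; the order of $e$ is $|T(e)|+1$. A network dynamical system on it is $\dot x_k = F(x_k) + \sum_{e\in\mathcal{E}:\,k\in H(e)} G_e(x_k; x_{T(e)})$ on $\mathbb{R}^N$, with $F$ smooth and each $G_e:\mathbb{R}\times\mathbb{R}^{|T(e)|}\to\mathbb{R}$ smooth, invariant under permutations of its tail arguments and depending nontrivially on them. The coupling is homogeneous in each order if $G_e=G^{(m)}$ for all hyperedges $e$ of order $m$. *)

theory Defs
  imports "HOL-Analysis.Analysis"
begin

text \<open>This is equivalent to all partial derivatives of all orders
  existing (and hence being continuous).\<close>
definition smooth_fun :: "('a::euclidean_space \<Rightarrow> real) \<Rightarrow> bool" where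
  "smooth_fun g \<longleftrightarrow> (\<exists>D. g \<in> D \<and>
     (\<forall>h\<in>D. (\<forall>x. h differentiable (at x)) \<and>
        (\<forall>i\<in>Basis. (\<lambda>x. frechet_derivative h (at x) i) \<in> D)))"

text \<open>Hyperedges are pairs (tail, head) of vertex sets.  The three admissible
  order-3 hyperedges on {1,2,3} with disjoint tail and head.\<close>
definition order3_edges :: "(nat set \<times> nat set) set" where
  "order3_edges = {({2,3},{1}), ({1,3},{2}), ({1,2},{3})}"

text \<open>Network vector field with homogeneous order-3 coupling G (a function of
  x_k and the two tail variables, symmetric in the tail variables; the tail
  variables are passed in the order min, max of the tail set).\<close>
definition net_field ::
  "(real \<Rightarrow> real) \<Rightarrow> (real \<Rightarrow> real \<Rightarrow> real \<Rightarrow> real) \<Rightarrow> (nat set \<times> nat set) set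
     \<Rightarrow> (nat \<Rightarrow> real) \<Rightarrow> nat \<Rightarrow> real" where
  "net_field F G E x k = F (x k) +
     (\<Sum>e\<in>{e\<in>E. k \<in> snd e}. G (x k) (x (Min (fst e))) (x (Max (fst e))))"

definition gh_field :: "real \<Rightarrow> real \<Rightarrow> real \<Rightarrow> (nat \<Rightarrow> real) \<Rightarrow> nat \<Rightarrow> real" where
  "gh_field a b c x k =
     (if k = 1 then x 1 + a * x 1 ^ 3 + b * x 1 * x 2 ^ 2 + c * x 1 * x 3 ^ 2
      else if k = 2 then x 2 + a * x 2 ^ 3 + b * x 2 * x 3 ^ 2 + c * x 1 ^ 2 * x 2
      else x 3 + a * x 3 ^ 3 + b * x 1 ^ 2 * x 3 + c * x 2 ^ 2 * x 3)"

end

theory Submission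
  imports Defs
begin

text \<open>The first component of a network field on such a hypergraph is F(x_1), plus G(x_1; x_2, x_3)
  if the hyperedge ({2,3},{1}) is present; by the symmetry of G in its tail arguments it is
  invariant under swapping x_2 and x_3.  The first Guckenheimer--Holmes component changes by
  (b - c) x_1 (x_2^2 - x_3^2) under that swap, which is nonzero at x = (1,1,0) when b \<noteq> c.\<close>

lemma net_field_first_component:
  assumes "E \<subseteq> order3_edges"
  shows "net_field F G E x 1 = F (x 1) + (if ({2,3},{1}) \<in> E then G (x 1) (x 2) (x 3) else 0)"
proof -
  have "{e\<in>E. (1::nat) \<in> snd e} = (if ({2,3},{1}) \<in> E then {({2,3},{1})} else {})"
    using assms unfolding order3_edges_def by auto
  moreover have "Min {2::nat,3} = 2" "Max {2::nat,3} = 3" by auto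
  ultimately show ?thesis unfolding net_field_def by simp
qed

lemma net_field_first_component_swap_invariant:
  assumes "E \<subseteq> order3_edges" and "\<forall>y u v. G y u v = G y v u"
  shows "net_field F G E (x(2 := x 3, 3 := x 2)) 1 = net_field F G E x 1"
  unfolding net_field_first_component[OF assms(1)] using assms(2) by simp

lemma gh_field_first_component_swap:
  "gh_field a b c x 1 - gh_field a b c (x(2 := x 3, 3 := x 2)) 1
     = (b - c) * x 1 * (x 2 ^ 2 - x 3 ^ 2)"
  unfolding gh_field_def by (simp add: algebra_simps)

theorem mainTheorem5:
  fixes F :: "real \<Rightarrow> real" and G :: "real \<Rightarrow> real \<Rightarrow> real \<Rightarrow> real"
    and E :: "(nat set \<times> nat set) set" and a b c :: real
  assumes "E \<subseteq> order3_edges"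
    and "smooth_fun F"
    and "smooth_fun (\<lambda>(y::real, u::real, v::real). G y u v)"
    and "\<forall>y u v. G y u v = G y v u"
    and "\<exists>y u v u' v'. G y u v \<noteq> G y u' v'"
    and "b \<noteq> c"
  shows "\<not> (\<forall>x. \<forall>k\<in>{1,2,3}. net_field F G E x k = gh_field a b c x k)"
proof
  assume realizes: "\<forall>x. \<forall>k\<in>{1,2,3}. net_field F G E x k = gh_field a b c x k"
  define x :: "nat \<Rightarrow> real" where "x = (\<lambda>i. if i = 3 then 0 else 1)"
  have "gh_field a b c x 1 = gh_field a b c (x(2 := x 3, 3 := x 2)) 1"
    using realizes net_field_first_component_swap_invariant[OF assms(1,4), of F x] by auto
  with gh_field_first_component_swap[of a b c x] have "b - c = 0"
    by (simp add: x_def)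
  with assms(6) show False by simp
qed

end
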